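(* Let $Q$ be a non-degenerate quadratic form of signature $(p,p)$ on a real vector space $V$, and let $\mathcal J=\{j\in\mathrm{GL}(V): j^*Q=-Q,\ j^2=\mathrm{Id}\}$. Let $X$ be a complex $\mathrm{GL}(V)$-module and $X^{\mathrm O(Q)}$ its subspace of $\mathrm O(Q)$-invariant vectors. For $j\in\mathcal J$, $j$ preserves $X^{\mathrm O(Q)}$, and one has $X^{\mathrm O(Q)}=X^{\mathrm O(Q),j}\oplus X^{\mathrm O(Q),-j}$ with $X^{\mathrm O(Q),\pm j}=\{v\in X^{\mathrm O(Q)}: jv=\pm v\}$. This decomposition is independent of the choice of $j\in\mathcal J$.
   Context: $j^*Q$ denotes the form $x\mapsto Q(jx)$. *)

theory Defs
  imports "HOL-Analysis.Analysis"
begin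

definition is_quadratic_form :: "('v::real_vector \<Rightarrow> real) \<Rightarrow> bool" where
  "is_quadratic_form Q \<longleftrightarrow>
     (\<exists>B. bilinear B \<and> (\<forall>x y. B x y = B y x) \<and> (\<forall>x. Q x = B x x))"

definition polar_form :: "('v::real_vector \<Rightarrow> real) \<Rightarrow> 'v \<Rightarrow> 'v \<Rightarrow> real" where
  "polar_form Q x y = (Q (x + y) - Q x - Q y) / 2"

definition nondegenerate_qf :: "('v::real_vector \<Rightarrow> real) \<Rightarrow> bool" where
  "nondegenerate_qf Q \<longleftrightarrow> (\<forall>x. (\<forall>y. polar_form Q x y = 0) \<longrightarrow> x = 0)"

definition has_signature :: "('v::euclidean_space \<Rightarrow> real) \<Rightarrow> nat \<Rightarrow> nat \<Rightarrow> bool" where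
  "has_signature Q p q \<longleftrightarrow>
     (\<exists>e :: nat \<Rightarrow> 'v.
        inj_on e {..<p+q} \<and> independent (e ` {..<p+q}) \<and> span (e ` {..<p+q}) = UNIV \<and>
        (\<forall>c. Q (\<Sum>i<p+q. c i *\<^sub>R e i) = (\<Sum>i<p. (c i)\<^sup>2) - (\<Sum>i\<in>{p..<p+q}. (c i)\<^sup>2)))"

definition GLV :: "('v::real_vector \<Rightarrow> 'v) set" where
  "GLV = {g. linear g \<and> bij g}"

definition orth_group :: "('v::real_vector \<Rightarrow> real) \<Rightarrow> ('v \<Rightarrow> 'v) set" where
  "orth_group Q = {g \<in> GLV. \<forall>x. Q (g x) = Q x}"

definition J_set :: "('v::real_vector \<Rightarrow> real) \<Rightarrow> ('v \<Rightarrow> 'v) set" where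
  "J_set Q = {j \<in> GLV. (\<forall>x. Q (j x) = - Q x) \<and> j \<circ> j = id}"

definition is_complex_GL_module ::
  "(complex \<Rightarrow> 'x::ab_group_add \<Rightarrow> 'x) \<Rightarrow> (('v::real_vector \<Rightarrow> 'v) \<Rightarrow> 'x \<Rightarrow> 'x) \<Rightarrow> bool" where
  "is_complex_GL_module sc \<rho> \<longleftrightarrow>
     vector_space sc \<and>
     (\<forall>g\<in>GLV. Vector_Spaces.linear sc sc (\<rho> g)) \<and>
     (\<forall>g\<in>GLV. \<forall>h\<in>GLV. \<rho> (g \<circ> h) = \<rho> g \<circ> \<rho> h) \<and>
     \<rho> id = id"

definition invariants :: "(('v \<Rightarrow> 'v) \<Rightarrow> 'x \<Rightarrow> 'x) \<Rightarrow> ('v \<Rightarrow> 'v) set \<Rightarrow> 'x set" where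
  "invariants \<rho> G = {v. \<forall>g\<in>G. \<rho> g v = v}"

definition inv_plus :: "(('v \<Rightarrow> 'v) \<Rightarrow> 'x \<Rightarrow> 'x) \<Rightarrow> ('v \<Rightarrow> 'v) set \<Rightarrow> ('v \<Rightarrow> 'v) \<Rightarrow> 'x set" where
  "inv_plus \<rho> G j = {v \<in> invariants \<rho> G. \<rho> j v = v}"

definition inv_minus :: "(('v \<Rightarrow> 'v) \<Rightarrow> 'x::uminus \<Rightarrow> 'x) \<Rightarrow> ('v \<Rightarrow> 'v) set \<Rightarrow> ('v \<Rightarrow> 'v) \<Rightarrow> 'x set" where
  "inv_minus \<rho> G j = {v \<in> invariants \<rho> G. \<rho> j v = - v}"

end

theory Submission
  imports Defs
begin

text \<open>Conjugation by any \<open>j \<in> J\<close> normalises \<open>O(Q)\<close>, and any two elements of \<open>J\<close> differ by an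
  element of \<open>O(Q)\<close>. Hence on \<open>O(Q)\<close>-invariant vectors all \<open>\<rho> j\<close> coincide with one linear
  involution preserving the invariants, whose \<open>\<pm>1\<close>-eigenspaces split them via
  \<open>v = (v + jv)/2 + (v - jv)/2\<close>.\<close>

lemma GLV_comp: "g \<in> GLV \<Longrightarrow> h \<in> GLV \<Longrightarrow> g \<circ> h \<in> GLV"
  unfolding GLV_def by (auto intro: linear_compose bij_comp)

lemma J_set_comp_in_orth_group:
  assumes "j \<in> J_set Q" "j' \<in> J_set Q"
  shows "j' \<circ> j \<in> orth_group Q"
  using assms GLV_comp unfolding J_set_def orth_group_def by auto

lemma J_set_conj_in_orth_group:
  assumes "j \<in> J_set Q" "g \<in> orth_group Q"
  shows "j \<circ> g \<circ> j \<in> orth_group Q"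
proof -
  have "j \<in> GLV" "g \<in> GLV"
    using assms unfolding J_set_def orth_group_def by auto
  then have "j \<circ> g \<circ> j \<in> GLV"
    by (intro GLV_comp)
  then show ?thesis
    using assms unfolding J_set_def orth_group_def by auto
qed

lemma rep_involution:
  assumes mult: "\<And>g h. g \<in> GLV \<Longrightarrow> h \<in> GLV \<Longrightarrow> \<rho> (g \<circ> h) = \<rho> g \<circ> \<rho> h"
    and "\<rho> id = id" "h \<in> GLV" "h \<circ> h = id"
  shows "\<rho> h (\<rho> h v) = v"
  using assms mult[of h h] by (metis comp_apply id_apply)

lemma rep_maps_invariants:
  assumes mult: "\<And>g h. g \<in> GLV \<Longrightarrow> h \<in> GLV \<Longrightarrow> \<rho> (g \<circ> h) = \<rho> g \<circ> \<rho> h"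
    and "\<rho> id = id" and h: "h \<in> GLV" "h \<circ> h = id"
    and G: "G \<subseteq> GLV" "\<And>g. g \<in> G \<Longrightarrow> h \<circ> g \<circ> h \<in> G"
    and v: "v \<in> invariants \<rho> G"
  shows "\<rho> h v \<in> invariants \<rho> G"
  unfolding invariants_def mem_Collect_eq
proof
  fix g assume g: "g \<in> G"
  have "\<rho> (h \<circ> g \<circ> h) = \<rho> h \<circ> \<rho> g \<circ> \<rho> h"
    using g G(1) h(1) by (auto simp: mult GLV_comp)
  moreover have "\<rho> (h \<circ> g \<circ> h) v = v"
    using v G(2)[OF g] unfolding invariants_def by blast
  ultimately have "\<rho> h (\<rho> g (\<rho> h v)) = v"
    by simp
  then show "\<rho> g (\<rho> h v) = \<rho> h v"
    using rep_involution[OF mult \<open>\<rho> id = id\<close> h] by metis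
qed

lemma rep_agree_on_invariants:
  assumes mult: "\<And>g h. g \<in> GLV \<Longrightarrow> h \<in> GLV \<Longrightarrow> \<rho> (g \<circ> h) = \<rho> g \<circ> \<rho> h"
    and "\<rho> id = id" "h \<in> GLV" and h': "h' \<in> GLV" "h' \<circ> h' = id"
    and "h' \<circ> h \<in> G" "v \<in> invariants \<rho> G"
  shows "\<rho> h v = \<rho> h' v"
proof -
  have "\<rho> (h' \<circ> h) v = v"
    using assms(6,7) unfolding invariants_def by blast
  then have "\<rho> h' (\<rho> h v) = v"
    using mult[OF h'(1) \<open>h \<in> GLV\<close>] by simp
  then show ?thesis
    using rep_involution[OF mult \<open>\<rho> id = id\<close> h'] by metis
qed

lemma (in vector_space) subspace_invariants:
  assumes "\<And>g. g \<in> G \<Longrightarrow> Vector_Spaces.linear scale scale (\<rho> g)"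
  shows "subspace (invariants \<rho> G)"
proof -
  have "\<rho> g 0 = 0" "\<rho> g (x + y) = \<rho> g x + \<rho> g y" "\<rho> g (scale c x) = scale c (\<rho> g x)"
    if "g \<in> G" for g x y c
    using module_hom_linearI[OF assms[OF that]]
    by (simp_all add: module_hom.zero module_hom.add module_hom.scale)
  then show ?thesis
    unfolding subspace_def invariants_def by auto
qed

lemma (in vector_space) involution_eigen_decomposition:
  fixes f :: "'b \<Rightarrow> 'b"
  assumes two_nonzero: "(2 :: 'a) \<noteq> 0"
    and f: "Vector_Spaces.linear scale scale f" and S: "subspace S"
    and f_S: "\<And>v. v \<in> S \<Longrightarrow> f v \<in> S" and invol: "\<And>v. v \<in> S \<Longrightarrow> f (f v) = v"
    and v: "v \<in> S"
  shows "\<exists>!(a, b). a \<in> {a \<in> S. f a = a} \<and> b \<in> {b \<in> S. f b = - b} \<and> v = a + b"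
proof -
  interpret f: Vector_Spaces.linear scale scale f by (fact f)
  have half: "scale (1/2) (x + x) = x" for x
  proof -
    have "x + x = scale 2 x"
      using scale_left_distrib[of 1 1 x] by simp
    then show ?thesis
      using two_nonzero by simp
  qed
  define a where "a = scale (1/2) (v + f v)"
  define b where "b = scale (1/2) (v - f v)"
  have "a \<in> S" "b \<in> S"
    unfolding a_def b_def by (intro subspace_scale subspace_add subspace_diff S v f_S)+
  moreover have "f a = a"
    unfolding a_def using invol v by (simp add: f.scale f.add add.commute)
  moreover have "f b = - b"
  proof -
    have "f b = scale (1/2) (f v - v)"
      unfolding b_def using invol v by (simp add: f.scale f.diff)
    also have "\<dots> = - b"
      unfolding b_def by (simp add: scale_right_diff_distrib)
    finally show ?thesis .
  qed
  ultimately have a: "a \<in> {a \<in> S. f a = a}" and b: "b \<in> {b \<in> S. f b = - b}"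
    by auto
  have sum: "v = a + b"
    unfolding a_def b_def by (simp add: scale_right_distrib[symmetric] half)
  have unique: "a' = a \<and> b' = b"
    if a': "a' \<in> {a \<in> S. f a = a}" and b': "b' \<in> {b \<in> S. f b = - b}" and "v = a' + b'"
    for a' b'
  proof -
    have e: "a - a' = b' - b"
      using sum \<open>v = a' + b'\<close> by (simp add: algebra_simps)
    \<comment> \<open>\<open>a - a'\<close> is fixed by \<open>f\<close> and negated by it, hence \<open>0\<close> because \<open>2 \<noteq> 0\<close>\<close>
    have "f (a - a') = a - a'" "f (b' - b) = - (b' - b)"
      using a a' b b' by (simp_all add: f.diff)
    then have "(a - a') + (a - a') = 0"
      using e by (metis add.right_inverse)
    then have "a - a' = 0"
      using half[of "a - a'"] by simp
    then show ?thesis using e by simp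
  qed
  show ?thesis
  proof (rule ex1I[of _ "(a, b)"])
    show "case (a, b) of (a, b) \<Rightarrow> a \<in> {a \<in> S. f a = a} \<and> b \<in> {b \<in> S. f b = - b} \<and> v = a + b"
      using a b sum by simp
  next
    fix y
    assume y: "case y of (a', b') \<Rightarrow> a' \<in> {a \<in> S. f a = a} \<and> b' \<in> {b \<in> S. f b = - b} \<and> v = a' + b'"
    obtain a' b' where "y = (a', b')"
      by (cases y)
    with y unique[of a' b'] show "y = (a, b)"
      by simp
  qed
qed

theorem mainTheorem8:
  fixes Q :: "'v::euclidean_space \<Rightarrow> real"
    and p :: nat
    and sc :: "complex \<Rightarrow> 'x::ab_group_add \<Rightarrow> 'x"
    and \<rho> :: "('v \<Rightarrow> 'v) \<Rightarrow> 'x \<Rightarrow> 'x"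
  assumes "is_quadratic_form Q"
    and "nondegenerate_qf Q"
    and "has_signature Q p p"
    and "is_complex_GL_module sc \<rho>"
  shows "(\<forall>j\<in>J_set Q.
            (\<forall>v\<in>invariants \<rho> (orth_group Q). \<rho> j v \<in> invariants \<rho> (orth_group Q)) \<and>
            (\<forall>v\<in>invariants \<rho> (orth_group Q).
               \<exists>!(a, b). a \<in> inv_plus \<rho> (orth_group Q) j \<and>
                         b \<in> inv_minus \<rho> (orth_group Q) j \<and> v = a + b)) \<and>
         (\<forall>j\<in>J_set Q. \<forall>j'\<in>J_set Q.
            inv_plus \<rho> (orth_group Q) j = inv_plus \<rho> (orth_group Q) j' \<and>
            inv_minus \<rho> (orth_group Q) j = inv_minus \<rho> (orth_group Q) j')"
proof -
  let ?O = "orth_group Q"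
  have vs: "vector_space sc" and lin: "\<And>g. g \<in> GLV \<Longrightarrow> Vector_Spaces.linear sc sc (\<rho> g)"
    and mult: "\<And>g h. g \<in> GLV \<Longrightarrow> h \<in> GLV \<Longrightarrow> \<rho> (g \<circ> h) = \<rho> g \<circ> \<rho> h"
    and "\<rho> id = id"
    using assms(4) unfolding is_complex_GL_module_def by auto
  have O_GLV: "?O \<subseteq> GLV"
    unfolding orth_group_def by auto
  have J: "j \<in> GLV" "j \<circ> j = id" if "j \<in> J_set Q" for j
    using that unfolding J_set_def by auto
  have S: "Modules.module.subspace sc (invariants \<rho> ?O)"
    by (rule vector_space.subspace_invariants[OF vs]) (use lin O_GLV in blast)
  have preserves: "\<rho> j v \<in> invariants \<rho> ?O"
    if j: "j \<in> J_set Q" and v: "v \<in> invariants \<rho> ?O" for j v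
    using rep_maps_invariants[OF mult \<open>\<rho> id = id\<close> J[OF j] O_GLV
        J_set_conj_in_orth_group[OF j] v] .
  have decomposition: "\<exists>!(a, b). a \<in> inv_plus \<rho> ?O j \<and> b \<in> inv_minus \<rho> ?O j \<and> v = a + b"
    if j: "j \<in> J_set Q" and v: "v \<in> invariants \<rho> ?O" for j v
    unfolding inv_plus_def inv_minus_def
    by (rule vector_space.involution_eigen_decomposition[OF vs _ lin[OF J(1)[OF j]] S
          preserves[OF j] rep_involution[OF mult \<open>\<rho> id = id\<close> J[OF j]] v]) simp
  have independence: "inv_plus \<rho> ?O j = inv_plus \<rho> ?O j' \<and> inv_minus \<rho> ?O j = inv_minus \<rho> ?O j'"
    if j: "j \<in> J_set Q" and j': "j' \<in> J_set Q" for j j'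
  proof -
    have agree: "\<rho> j v = \<rho> j' v" if "v \<in> invariants \<rho> ?O" for v
      using rep_agree_on_invariants[OF mult \<open>\<rho> id = id\<close> J(1)[OF j] J[OF j']
          J_set_comp_in_orth_group[OF j j'] that] .
    show ?thesis
      unfolding inv_plus_def inv_minus_def
      by (intro conjI Collect_cong conj_cong refl) (simp_all add: agree)
  qed
  show ?thesis
    by (intro conjI ballI preserves decomposition independence)
qed

end
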